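(* Let $\phi=\phi_{\mathrm{NH}}$, $\phi_{\mathrm{NH}}(y,t)=t^{-1/2}\exp(y^2/(2t))$, and $\Phi(\boldsymbol x,t)=\sum_{i=1}^N\phi(x_i,t)$. Let $B>0$, $\boldsymbol x\in[0,\infty)^N$, $t>0$, $\boldsymbol p\in\Delta^{N-1}$ with $p_i\propto\partial_x\phi(x_i,t)$ (arbitrary if all these vanish), $\boldsymbol\ell\in\mathbb{R}^N$ with $\max_{i,i'}|\ell_i-\ell_{i'}|\le B$, $\Delta x_i=\langle\boldsymbol p,\boldsymbol\ell\rangle-\ell_i$, and let $\Delta t\ge0$ be such that $\Phi(\boldsymbol x+\Delta\boldsymbol x,t+\Delta t)=\Phi(\boldsymbol x,t)$. If $K>0$ is such that $\max_{i\in[N]}x_i^2/t\le K$, then $$t\ge256e^2B^2\max\{K,1\}\implies\Delta t\le2eB^2.$$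
   Context: $\Delta^{N-1}$ is the probability simplex in $\mathbb{R}^N$. *)

theory Defs
  imports "HOL-Analysis.Analysis"
begin

definition phiNH :: "real \<Rightarrow> real \<Rightarrow> real" where
  "phiNH y t = t powr (-1/2) * exp (y^2 / (2 * t))"

text \<open>Phi(x,t) = sum_{i<N} phi(x_i,t); vectors in R^N are functions on {..<N}.\<close>
definition PhiNH :: "nat \<Rightarrow> (nat \<Rightarrow> real) \<Rightarrow> real \<Rightarrow> real" where
  "PhiNH N x t = (\<Sum>i<N. phiNH (x i) t)"

definition prob_simplex :: "nat \<Rightarrow> (nat \<Rightarrow> real) set" where
  "prob_simplex N = {p. (\<forall>i<N. 0 \<le> p i) \<and> (\<Sum>i<N. p i) = 1}"

end

theory Submission
  imports Defs
begin

text \<open>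
  Advancing time by \<open>s = 2 e B\<^sup>2\<close> pushes every summand of \<open>\<Phi>\<close> below its tangent in the
  space variable: with \<open>a = x/\<surd>t\<close>, \<open>u = d/\<surd>t\<close> and \<open>\<epsilon> = s/t\<close> one has
  \<open>\<phi>(x + d, t + s) / \<phi>(x, t) = exp ((a + u)\<^sup>2 / (2(1 + \<epsilon>)) - a\<^sup>2/2) / \<surd>(1 + \<epsilon>)\<close>,
  and the bounds \<open>ln (1 + z) \<ge> z - 2z\<^sup>2\<close>, \<open>ln (1 + \<epsilon>) \<ge> \<epsilon> - \<epsilon>\<^sup>2\<close> show that this is at
  most \<open>1 + a u\<close> as soon as \<open>B\<^sup>2/t\<close> is small compared with \<open>\<epsilon>\<close> and \<open>x B / t\<close> is small.
  The displacements \<open>d\<^sub>i = \<langle>p, l\<rangle> - l\<^sub>i\<close> are bounded by \<open>B\<close> and, as \<open>p\<close> is proportional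
  to the gradient of \<open>\<Phi>\<close>, orthogonal to that gradient. Summing the tangent bounds gives
  \<open>\<Phi>(x + \<Delta>x, t + s) \<le> \<Phi>(x, t)\<close>, and since \<open>\<Phi>\<close> is strictly decreasing in time, \<open>\<Delta>t \<le> s\<close>.
\<close>

lemma phiNH_eq_exp: "0 < t \<Longrightarrow> phiNH y t = exp (y\<^sup>2 / (2 * t) - ln t / 2)"
  by (simp add: phiNH_def powr_def mult_exp_exp)

lemma phiNH_scale:
  assumes "0 < r" "0 < t"
  shows "phiNH (r * y) (r\<^sup>2 * t) = phiNH y t / r"
proof -
  have "(r * y)\<^sup>2 / (2 * (r\<^sup>2 * t)) - ln (r\<^sup>2 * t) / 2 = (y\<^sup>2 / (2 * t) - ln t / 2) - ln r"
    using assms by (simp add: power_mult_distrib ln_mult ln_realpow field_simps)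
  then show ?thesis
    using assms by (simp add: phiNH_eq_exp exp_diff)
qed

lemma phiNH_strict_antimono:
  assumes "0 < t" "t < t'"
  shows "phiNH y t' < phiNH y t"
proof -
  have "y\<^sup>2 / (2 * t') \<le> y\<^sup>2 / (2 * t)"
    using assms by (intro divide_left_mono) auto
  moreover have "ln t < ln t'"
    using assms by simp
  ultimately have "y\<^sup>2 / (2 * t') - ln t' / 2 < y\<^sup>2 / (2 * t) - ln t / 2"
    by linarith
  then show ?thesis
    using assms by (simp add: phiNH_eq_exp)
qed

lemma PhiNH_strict_antimono:
  assumes "0 < N" "0 < t" "t < t'"
  shows "PhiNH N x t' < PhiNH N x t"
  unfolding PhiNH_def using assms by (intro sum_strict_mono phiNH_strict_antimono) auto

lemma deriv_phiNH:
  assumes "0 < t"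
  shows "deriv (\<lambda>y. phiNH y t) y = phiNH y t * (y / t)"
proof -
  have "((\<lambda>y. t powr (-1/2) * exp (y\<^sup>2 / (2 * t))) has_real_derivative
          t powr (-1/2) * (exp (y\<^sup>2 / (2 * t)) * (2 * y / (2 * t)))) (at y)"
    using assms by (auto intro!: derivative_eq_intros simp: power2_eq_square)
  then show ?thesis
    unfolding phiNH_def using assms by (intro DERIV_imp_deriv) (simp add: field_simps)
qed

lemma exponent_le_tangent:
  fixes a u b \<epsilon> :: real
  assumes u: "\<bar>u\<bar> \<le> b" and eps: "0 \<le> \<epsilon>" "\<epsilon> \<le> 1/2"
    and b: "4 * (1 + \<epsilon>) * b\<^sup>2 \<le> \<epsilon>" and ab: "8 * \<bar>a\<bar> * b \<le> 1"
  shows "(a + u)\<^sup>2 / (2 * (1 + \<epsilon>)) - a\<^sup>2 / 2 \<le> a * u - 2 * (a * u)\<^sup>2 + (\<epsilon> - \<epsilon>\<^sup>2) / 2"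
proof -
  have u2: "u\<^sup>2 \<le> b\<^sup>2"
    using power_mono[OF u abs_ge_zero, of 2] by simp
  have "4 * (1 + \<epsilon>) * (a * u)\<^sup>2 \<le> 4 * (1 + \<epsilon>) * b\<^sup>2 * a\<^sup>2"
    using mult_left_mono[OF u2, of "4 * (1 + \<epsilon>) * a\<^sup>2"] eps by (simp add: power_mult_distrib ac_simps)
  also have "\<dots> \<le> \<epsilon> * a\<^sup>2"
    using b by (simp add: mult_right_mono)
  finally have quartic: "4 * (1 + \<epsilon>) * (a * u)\<^sup>2 \<le> \<epsilon> * a\<^sup>2" .
  have "0 \<le> \<epsilon> * b\<^sup>2"
    using eps by simp
  then have quadratic: "u\<^sup>2 \<le> \<epsilon> / 4"
    using u2 b by (simp add: algebra_simps)
  have "\<bar>a * u\<bar> \<le> 1/8"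
    using mult_left_mono[OF u, of "\<bar>a\<bar>"] ab by (simp add: abs_mult)
  then have cross: "- (2 * \<epsilon> * (a * u)) \<le> \<epsilon> / 4"
    using mult_left_mono[of "- (a * u)" "1/8" "2 * \<epsilon>"] eps by simp
  have cubic: "\<epsilon> * \<epsilon>\<^sup>2 \<le> \<epsilon> / 2"
    using mult_left_mono[OF mult_mono[OF eps(2) eps(2)], of \<epsilon>] eps by (simp add: power2_eq_square)
  have "u\<^sup>2 - \<epsilon> * a\<^sup>2 - 2 * \<epsilon> * (a * u) + 4 * (1 + \<epsilon>) * (a * u)\<^sup>2 \<le> \<epsilon> - \<epsilon> * \<epsilon>\<^sup>2"
    using quartic quadratic cross cubic by linarith
  then show ?thesis
    using eps by (simp add: field_simps power2_eq_square)
qed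

lemma phiNH_unit_le_tangent:
  fixes a u b \<epsilon> :: real
  assumes "\<bar>u\<bar> \<le> b" "0 \<le> \<epsilon>" "\<epsilon> \<le> 1/2" "4 * (1 + \<epsilon>) * b\<^sup>2 \<le> \<epsilon>" "8 * \<bar>a\<bar> * b \<le> 1"
  shows "phiNH (a + u) (1 + \<epsilon>) \<le> phiNH a 1 * (1 + a * u)"
proof -
  have "\<bar>a * u\<bar> \<le> 1/2"
    using mult_left_mono[OF assms(1), of "\<bar>a\<bar>"] assms(5) by (simp add: abs_mult)
  then have ln_au: "a * u - 2 * (a * u)\<^sup>2 \<le> ln (1 + a * u)"
    using abs_ln_one_plus_x_minus_x_bound[of "a * u"] by linarith
  have ln_eps: "\<epsilon> - \<epsilon>\<^sup>2 \<le> ln (1 + \<epsilon>)"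
    using assms(2,3) by (intro ln_one_plus_pos_lower_bound) auto
  have "(a + u)\<^sup>2 / (2 * (1 + \<epsilon>)) - ln (1 + \<epsilon>) / 2 \<le> a\<^sup>2 / 2 + ln (1 + a * u)"
    using exponent_le_tangent[OF assms] ln_au ln_eps by argo
  then have "phiNH (a + u) (1 + \<epsilon>) \<le> exp (a\<^sup>2 / 2 + ln (1 + a * u))"
    using assms(2) by (simp add: phiNH_eq_exp)
  also have "\<dots> = phiNH a 1 * (1 + a * u)"
    using \<open>\<bar>a * u\<bar> \<le> 1/2\<close> by (simp add: phiNH_eq_exp exp_add)
  finally show ?thesis .
qed

lemma phiNH_le_tangent:
  fixes x d t s B :: real
  assumes t: "0 < t" and d: "\<bar>d\<bar> \<le> B" and s: "0 \<le> s" "2 * s \<le> t"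
    and B: "4 * (t + s) * B\<^sup>2 \<le> s * t" and x: "8 * \<bar>x\<bar> * B \<le> t"
  shows "phiNH (x + d) (t + s) \<le> phiNH x t + deriv (\<lambda>y. phiNH y t) x * d"
proof -
  define r where "r = sqrt t"
  have r: "0 < r" "r\<^sup>2 = t"
    using t by (auto simp: r_def)
  have "\<bar>d / r\<bar> \<le> B / r"
    using d r by (simp add: divide_right_mono)
  moreover have eps: "0 \<le> s / t" "s / t \<le> 1/2"
    using t s by (simp_all add: field_simps)
  moreover have "4 * (1 + s / t) * (B / r)\<^sup>2 \<le> s / t"
    using t r mult_right_mono[OF B, of t] by (simp add: power_divide field_simps)
  moreover have "8 * \<bar>x / r\<bar> * (B / r) \<le> 1"
    using t x r by (simp add: field_simps power2_eq_square)
  ultimately have unit: "phiNH (x / r + d / r) (1 + s / t) \<le> phiNH (x / r) 1 * (1 + x / r * (d / r))"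
    by (rule phiNH_unit_le_tangent)
  have "r * (x / r + d / r) = x + d" "r\<^sup>2 * (1 + s / t) = t + s"
    using r t by (simp_all add: field_simps)
  then have "phiNH (x + d) (t + s) = phiNH (x / r + d / r) (1 + s / t) / r"
    using phiNH_scale[OF r(1), of "1 + s / t" "x / r + d / r"] eps(1) by simp
  also have "\<dots> \<le> phiNH (x / r) 1 * (1 + x * d / t) / r"
    using unit r by (simp add: divide_right_mono power2_eq_square)
  also have "\<dots> = phiNH x t * (1 + x * d / t)"
    using phiNH_scale[OF r(1), of 1 "x / r"] r by simp
  also have "\<dots> = phiNH x t + deriv (\<lambda>y. phiNH y t) x * d"
    using t by (simp add: deriv_phiNH algebra_simps)
  finally show ?thesis .
qed

lemma PhiNH_shift_le:
  assumes t: "0 < t" and d: "\<forall>i<N. \<bar>d i\<bar> \<le> B" and s: "0 \<le> s" "2 * s \<le> t"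
    and B: "4 * (t + s) * B\<^sup>2 \<le> s * t" and x: "\<forall>i<N. 8 * \<bar>x i\<bar> * B \<le> t"
    and tangent: "(\<Sum>i<N. deriv (\<lambda>y. phiNH y t) (x i) * d i) = 0"
  shows "PhiNH N (\<lambda>i. x i + d i) (t + s) \<le> PhiNH N x t"
proof -
  have "PhiNH N (\<lambda>i. x i + d i) (t + s) \<le> (\<Sum>i<N. phiNH (x i) t + deriv (\<lambda>y. phiNH y t) (x i) * d i)"
    unfolding PhiNH_def using assms by (intro sum_mono phiNH_le_tangent) auto
  also have "\<dots> = PhiNH N x t"
    by (simp add: PhiNH_def sum.distrib tangent)
  finally show ?thesis .
qed

lemma prob_simplex_mean_deviation_le:
  assumes p: "p \<in> prob_simplex N" and l: "\<forall>i<N. \<forall>i'<N. \<bar>l i - l i'\<bar> \<le> B" and i: "i < N"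
  shows "\<bar>(\<Sum>j<N. p j * l j) - l i\<bar> \<le> B"
proof -
  have p0: "\<forall>j<N. 0 \<le> p j" and p1: "(\<Sum>j<N. p j) = 1"
    using p by (auto simp: prob_simplex_def)
  have "(\<Sum>j<N. p j * l j) - l i = (\<Sum>j<N. p j * (l j - l i))"
    by (simp add: right_diff_distrib sum_subtractf sum_distrib_right[symmetric] p1)
  also have "\<bar>\<dots>\<bar> \<le> (\<Sum>j<N. p j * B)"
    using p0 l i by (intro sum_abs[THEN order_trans] sum_mono) (simp add: abs_mult mult_left_mono)
  also have "\<dots> = B"
    by (simp add: sum_distrib_right[symmetric] p1)
  finally show ?thesis .
qed

lemma prob_simplex_mean_deviation:
  assumes "p \<in> prob_simplex N"
  shows "(\<Sum>i<N. p i * ((\<Sum>j<N. p j * l j) - l i)) = 0"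
  using assms by (simp add: prob_simplex_def right_diff_distrib sum_subtractf sum_distrib_right[symmetric])

lemma proportional_mean_deviation:
  assumes p: "p \<in> prob_simplex N" and g: "(\<exists>i<N. g i \<noteq> 0) \<longrightarrow> (\<exists>c. \<forall>i<N. p i = c * g i)"
  shows "(\<Sum>i<N. g i * ((\<Sum>j<N. p j * l j) - l i)) = 0"
proof (cases "\<exists>i<N. g i \<noteq> 0")
  case True
  then obtain c where c: "\<forall>i<N. p i = c * g i"
    using g by blast
  have "c * (\<Sum>i<N. g i * ((\<Sum>j<N. p j * l j) - l i)) = (\<Sum>i<N. p i * ((\<Sum>j<N. p j * l j) - l i))"
    using c by (simp add: sum_distrib_left mult.assoc)
  also have "\<dots> = 0"
    using p by (rule prob_simplex_mean_deviation)
  moreover have "c \<noteq> 0"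
  proof
    assume "c = 0"
    then have "(\<Sum>i<N. p i) = 0"
      using c by simp
    then show False
      using p by (simp add: prob_simplex_def)
  qed
  ultimately show ?thesis
    by simp
qed auto

lemma tangent_conditions_of_large_time:
  fixes t B K x :: real
  assumes B: "0 < B" and t: "256 * (exp 1)\<^sup>2 * B\<^sup>2 * max K 1 \<le> t"
  shows "4 * (t + 2 * exp 1 * B\<^sup>2) * B\<^sup>2 \<le> 2 * exp 1 * B\<^sup>2 * t"
    and "2 * (2 * exp 1 * B\<^sup>2) \<le> t"
    and "x\<^sup>2 \<le> K * t \<Longrightarrow> 8 * \<bar>x\<bar> * B \<le> t"
proof -
  have e: "5/2 \<le> exp (1::real)"
    using exp_lower_Taylor_quadratic[of 1] by simp
  have "256 * (exp 1)\<^sup>2 * B\<^sup>2 * 1 \<le> 256 * (exp 1)\<^sup>2 * B\<^sup>2 * max K 1"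
    by (intro mult_left_mono) auto
  then have tB: "256 * (exp 1)\<^sup>2 * B\<^sup>2 \<le> t"
    using t by linarith
  moreover have "0 \<le> 256 * (exp 1)\<^sup>2 * B\<^sup>2"
    by simp
  ultimately have t0: "0 \<le> t"
    by linarith
  have "8 * exp 1 * B\<^sup>2 \<le> 256 * (exp 1)\<^sup>2 * B\<^sup>2"
    using e by (intro mult_right_mono) (auto simp: power2_eq_square)
  then have t8: "8 * exp 1 * B\<^sup>2 \<le> t"
    using tB by linarith
  have "1 * t \<le> (2 * exp 1 - 4) * t"
    using e t0 by (intro mult_right_mono) auto
  then have "4 * t + 8 * exp 1 * B\<^sup>2 \<le> 2 * exp 1 * t"
    using t8 by (simp add: algebra_simps)
  from mult_left_mono[OF this, of "B\<^sup>2"]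
  show "4 * (t + 2 * exp 1 * B\<^sup>2) * B\<^sup>2 \<le> 2 * exp 1 * B\<^sup>2 * t"
    by (simp add: algebra_simps)
  show "2 * (2 * exp 1 * B\<^sup>2) \<le> t"
    using t8 mult_nonneg_nonneg[OF exp_ge_zero zero_le_power2, of 1 B] by linarith
  assume x: "x\<^sup>2 \<le> K * t"
  have "1 \<le> (exp 1::real)\<^sup>2"
    using e by (simp add: one_le_power)
  then have "64 \<le> 256 * (exp 1::real)\<^sup>2"
    by linarith
  then have "64 * (B\<^sup>2 * max K 1) \<le> 256 * (exp 1)\<^sup>2 * (B\<^sup>2 * max K 1)"
    by (rule mult_right_mono) simp
  then have tM: "64 * B\<^sup>2 * max K 1 \<le> t"
    using t by (simp add: ac_simps)
  have "K * t \<le> max K 1 * t"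
    using t0 by (intro mult_right_mono) auto
  have "(8 * \<bar>x\<bar> * B)\<^sup>2 = 64 * B\<^sup>2 * x\<^sup>2"
    by (simp add: power_mult_distrib)
  also have "\<dots> \<le> 64 * B\<^sup>2 * (max K 1 * t)"
    using x \<open>K * t \<le> max K 1 * t\<close> by (intro mult_left_mono) auto
  also have "\<dots> \<le> t\<^sup>2"
    using mult_right_mono[OF tM t0] by (simp add: power2_eq_square ac_simps)
  finally show "8 * \<bar>x\<bar> * B \<le> t"
    using t0 by (rule power2_le_imp_le)
qed

theorem lemma6p12:
  fixes N :: nat and x p l :: "nat \<Rightarrow> real" and t dt B K :: real
  assumes "B > 0"
    and "\<forall>i<N. 0 \<le> x i"
    and "t > 0"
    and "p \<in> prob_simplex N"
    and "(\<exists>i<N. deriv (\<lambda>y. phiNH y t) (x i) \<noteq> 0) \<longrightarrow>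
           (\<exists>c. \<forall>i<N. p i = c * deriv (\<lambda>y. phiNH y t) (x i))"
    and "\<forall>i<N. \<forall>i'<N. \<bar>l i - l i'\<bar> \<le> B"
    and "dt \<ge> 0"
    and "PhiNH N (\<lambda>i. x i + ((\<Sum>j<N. p j * l j) - l i)) (t + dt) = PhiNH N x t"
    and "K > 0"
    and "\<forall>i<N. (x i)^2 / t \<le> K"
  shows "t \<ge> 256 * (exp 1)^2 * B^2 * max K 1 \<longrightarrow> dt \<le> 2 * exp 1 * B^2"
proof
  note B = assms(1) and t = assms(3) and p = assms(4) and l = assms(6) and xK = assms(10)
  assume large: "t \<ge> 256 * (exp 1)^2 * B^2 * max K 1"
  define s where "s = 2 * exp 1 * B\<^sup>2"
  define d where "d i = (\<Sum>j<N. p j * l j) - l i" for i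
  have s: "0 \<le> s" "2 * s \<le> t" "4 * (t + s) * B\<^sup>2 \<le> s * t"
    using tangent_conditions_of_large_time[OF B large] by (simp_all add: s_def)
  have shift: "PhiNH N (\<lambda>i. x i + d i) (t + s) \<le> PhiNH N x t"
  proof (rule PhiNH_shift_le[OF t _ s])
    show "\<forall>i<N. \<bar>d i\<bar> \<le> B"
      using prob_simplex_mean_deviation_le[OF p l] by (simp add: d_def)
    show "\<forall>i<N. 8 * \<bar>x i\<bar> * B \<le> t"
      using tangent_conditions_of_large_time(3)[OF B large] xK t by (simp add: pos_divide_le_eq)
    show "(\<Sum>i<N. deriv (\<lambda>y. phiNH y t) (x i) * d i) = 0"
      using proportional_mean_deviation[OF p assms(5)] by (simp add: d_def)
  qed
  have "0 < N"
    using p by (cases N) (auto simp: prob_simplex_def)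
  show "dt \<le> 2 * exp 1 * B^2"
  proof (rule ccontr)
    assume "\<not> ?thesis"
    then have "t + s < t + dt"
      by (simp add: s_def)
    then have "PhiNH N (\<lambda>i. x i + d i) (t + dt) < PhiNH N (\<lambda>i. x i + d i) (t + s)"
      by (rule PhiNH_strict_antimono[OF \<open>0 < N\<close> add_pos_nonneg[OF t s(1)]])
    with shift assms(8) show False
      by (simp add: d_def)
  qed
qed

end
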